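(* Let $G'$ be a context-free grammar with start symbol $s$, no $\varepsilon$-rules and no useless nonterminal. Then there exists a prefix $\ell$ of $G'$ such that the explanation graph $\mathrm{Expl}(G_\ell)$ (defined in the context) is cyclic if and only if the left-corner relation of $G'$ is cyclic.
   Context: Grammar: $G'$ has finite terminal set $\Sigma$, finite nonterminal set $N$, start symbol $s\in N$; every rule $A\to\alpha$ has $\alpha\in(N\cup\Sigma)^+$; a rule is useless if it occurs in no derivation of a terminal string from $s$, and a nonterminal is useless if all its rules are useless. Nonterminals $X,Y$ are in the direct left-corner relation if there is a rule $X\to Y\beta$; the left-corner relation $\to_L$ is its transitive closure; it is cyclic if $X\to_L X$ for some nonterminal $X$. A prefix is a nonempty string $\ell\in\Sigma^+$ that is an initial segment of some terminal string derivable from $s$. Explanation graph. For a prefix $\ell$ consider ground atoms $q(\ell)$, $p(\beta,u,v)$ with $\beta\in(N\cup\Sigma)^*$, $u,v\in\Sigma^*$, and switch atoms $m(A\to\alpha)$ for rules of $G'$. Consider all ground clauses: (C0) $q(\ell)\leftarrow p(s,\ell,\varepsilon)$; (C1) $p(\varepsilon,u,u)\leftarrow$ (empty body), for all $u$; (C2) for $a\in\Sigma$: $p(a\beta,a,\varepsilon)\leftarrow$ (empty body); and $p(a\beta,av,w)\leftarrow p(\beta,v,w)$ whenever $v\neq\varepsilon$; (C3) for $A\in N$ and each rule $A\to\alpha$: $p(A\beta,u,\varepsilon)\leftarrow m(A\to\alpha)\wedge p(\alpha,u,\varepsilon)$; and $p(A\beta,u,w)\leftarrow m(A\to\alpha)\wedge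 p(\alpha,u,v)\wedge p(\beta,v,w)$ whenever $v\neq\varepsilon$. A $p$- or $q$-atom is provable if it lies in the least Herbrand model of these clauses with all $m$-atoms taken as true. (These clauses describe a top-down prefix parser which succeeds as soon as the input is consumed.) The defined goals of $\mathrm{Expl}(G_\ell)$ form the smallest set containing $q(\ell)$ and such that whenever $H$ is a defined goal and $H\leftarrow\alpha$ is one of the clauses above whose $p$-atoms are all provable, every $p$-atom of $\alpha$ is a defined goal. The defining formula of a defined goal $H$ is $H\Leftrightarrow\alpha_1\vee\dots\vee\alpha_M$, where $\alpha_1,\dots,\alpha_M$ are the bodies of all such clauses with head $H$ whose $p$-atoms are all provable. $H$ is a parent of $C$ if the defined goal $C$ occurs in some $\alpha_i$; the ancestor relation is the transitive closure of the parent relation; $\mathrm{Expl}(G_\ell)$ is cyclic if some defined goal is its own ancestor. *)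

theory Defs
  imports Main
begin

datatype ('n,'t) sym = NT 'n | Tm 't

definition syms :: "'n set \<Rightarrow> 't set \<Rightarrow> ('n,'t) sym set" where
  "syms N \<Sigma> = NT ` N \<union> Tm ` \<Sigma>"

definition cfg :: "'n set \<Rightarrow> 't set \<Rightarrow> ('n \<times> ('n,'t) sym list) set \<Rightarrow> 'n \<Rightarrow> bool" where
  "cfg N \<Sigma> R s \<longleftrightarrow> finite N \<and> finite \<Sigma> \<and> finite R \<and> s \<in> N \<and>
     (\<forall>(A,\<alpha>) \<in> R. A \<in> N \<and> \<alpha> \<noteq> [] \<and> set \<alpha> \<subseteq> syms N \<Sigma>)"

definition dstep :: "('n \<times> ('n,'t) sym list) set \<Rightarrow> ('n,'t) sym list \<Rightarrow> ('n,'t) sym list \<Rightarrow> bool" where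
  "dstep R x y \<longleftrightarrow> (\<exists>\<gamma> \<delta> A \<alpha>. (A,\<alpha>) \<in> R \<and> x = \<gamma> @ [NT A] @ \<delta> \<and> y = \<gamma> @ \<alpha> @ \<delta>)"

definition useless_rule :: "'t set \<Rightarrow> ('n \<times> ('n,'t) sym list) set \<Rightarrow> 'n \<Rightarrow> 'n \<times> ('n,'t) sym list \<Rightarrow> bool" where
  "useless_rule \<Sigma> R s r \<longleftrightarrow> \<not> (\<exists>\<gamma> \<delta> w. set w \<subseteq> \<Sigma> \<and>
       (dstep R)\<^sup>*\<^sup>* [NT s] (\<gamma> @ [NT (fst r)] @ \<delta>) \<and>
       (dstep R)\<^sup>*\<^sup>* (\<gamma> @ snd r @ \<delta>) (map Tm w))"

definition useless_nt :: "'t set \<Rightarrow> ('n \<times> ('n,'t) sym list) set \<Rightarrow> 'n \<Rightarrow> 'n \<Rightarrow> bool" where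
  "useless_nt \<Sigma> R s A \<longleftrightarrow> (\<forall>\<alpha>. (A,\<alpha>) \<in> R \<longrightarrow> useless_rule \<Sigma> R s (A,\<alpha>))"

definition is_prefix :: "'t set \<Rightarrow> ('n \<times> ('n,'t) sym list) set \<Rightarrow> 'n \<Rightarrow> 't list \<Rightarrow> bool" where
  "is_prefix \<Sigma> R s l \<longleftrightarrow> l \<noteq> [] \<and>
     (\<exists>w v. set w \<subseteq> \<Sigma> \<and> (dstep R)\<^sup>*\<^sup>* [NT s] (map Tm w) \<and> w = l @ v)"

definition lc_direct :: "('n \<times> ('n,'t) sym list) set \<Rightarrow> 'n \<Rightarrow> 'n \<Rightarrow> bool" where
  "lc_direct R X Y \<longleftrightarrow> (\<exists>\<beta>. (X, NT Y # \<beta>) \<in> R)"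

definition lc_cyclic :: "('n \<times> ('n,'t) sym list) set \<Rightarrow> bool" where
  "lc_cyclic R \<longleftrightarrow> (\<exists>X. (lc_direct R)\<^sup>+\<^sup>+ X X)"

datatype ('n,'t) atom =
    Qa "'t list"
  | Pa "('n,'t) sym list" "'t list" "'t list"
  | Ma "'n \<times> ('n,'t) sym list"

inductive clause :: "'n set \<Rightarrow> 't set \<Rightarrow> ('n \<times> ('n,'t) sym list) set \<Rightarrow> 'n \<Rightarrow> 't list
    \<Rightarrow> ('n,'t) atom \<Rightarrow> ('n,'t) atom list \<Rightarrow> bool"
  for N \<Sigma> R s l where
  C0: "clause N \<Sigma> R s l (Qa l) [Pa [NT s] l []]"
| C1: "set u \<subseteq> \<Sigma> \<Longrightarrow> clause N \<Sigma> R s l (Pa [] u u) []"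
| C2a: "a \<in> \<Sigma> \<Longrightarrow> set \<beta> \<subseteq> syms N \<Sigma> \<Longrightarrow>
        clause N \<Sigma> R s l (Pa (Tm a # \<beta>) [a] []) []"
| C2b: "a \<in> \<Sigma> \<Longrightarrow> set \<beta> \<subseteq> syms N \<Sigma> \<Longrightarrow> set v \<subseteq> \<Sigma> \<Longrightarrow> set w \<subseteq> \<Sigma> \<Longrightarrow> v \<noteq> [] \<Longrightarrow>
        clause N \<Sigma> R s l (Pa (Tm a # \<beta>) (a # v) w) [Pa \<beta> v w]"
| C3a: "A \<in> N \<Longrightarrow> (A,\<alpha>) \<in> R \<Longrightarrow> set \<beta> \<subseteq> syms N \<Sigma> \<Longrightarrow> set u \<subseteq> \<Sigma> \<Longrightarrow>
        clause N \<Sigma> R s l (Pa (NT A # \<beta>) u []) [Ma (A,\<alpha>), Pa \<alpha> u []]"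
| C3b: "A \<in> N \<Longrightarrow> (A,\<alpha>) \<in> R \<Longrightarrow> set \<beta> \<subseteq> syms N \<Sigma> \<Longrightarrow>
        set u \<subseteq> \<Sigma> \<Longrightarrow> set v \<subseteq> \<Sigma> \<Longrightarrow> set w \<subseteq> \<Sigma> \<Longrightarrow> v \<noteq> [] \<Longrightarrow>
        clause N \<Sigma> R s l (Pa (NT A # \<beta>) u w) [Ma (A,\<alpha>), Pa \<alpha> u v, Pa \<beta> v w]"

fun is_Ma :: "('n,'t) atom \<Rightarrow> bool" where
  "is_Ma (Ma _) = True" | "is_Ma _ = False"

fun is_Pa :: "('n,'t) atom \<Rightarrow> bool" where
  "is_Pa (Pa _ _ _) = True" | "is_Pa _ = False"

text \<open>Least Herbrand model with all m-atoms taken as true.\<close>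
inductive provable for N \<Sigma> R s l where
  "clause N \<Sigma> R s l H B \<Longrightarrow> (\<forall>b \<in> set B. is_Ma b \<or> provable N \<Sigma> R s l b)
   \<Longrightarrow> provable N \<Sigma> R s l H"

definition usable_clause where
  "usable_clause N \<Sigma> R s l H B \<longleftrightarrow> clause N \<Sigma> R s l H B \<and>
     (\<forall>b \<in> set B. is_Pa b \<longrightarrow> provable N \<Sigma> R s l b)"

inductive defined_goal for N \<Sigma> R s l where
  root: "defined_goal N \<Sigma> R s l (Qa l)"
| step: "defined_goal N \<Sigma> R s l H \<Longrightarrow> usable_clause N \<Sigma> R s l H B \<Longrightarrow>
         C \<in> set B \<Longrightarrow> is_Pa C \<Longrightarrow> defined_goal N \<Sigma> R s l C"

definition expl_parent where
  "expl_parent N \<Sigma> R s l H C \<longleftrightarrow> defined_goal N \<Sigma> R s l H \<and> defined_goal N \<Sigma> R s l C \<and>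
     (\<exists>B. usable_clause N \<Sigma> R s l H B \<and> C \<in> set B)"

definition expl_cyclic where
  "expl_cyclic N \<Sigma> R s l \<longleftrightarrow> (\<exists>C. (expl_parent N \<Sigma> R s l)\<^sup>+\<^sup>+ C C)"

end

theory Submission
  imports Defs
begin

text \<open>A clause (C3) links a goal \<open>p(A\<beta>, u, w)\<close> to its first child \<open>p(\<alpha>, u, v)\<close>, which still
  has to consume all of \<open>u\<close>; every other parent--child link strictly shortens the input, because
  there are no \<open>\<epsilon>\<close>-rules. So a cycle of \<open>Expl(G\<^sub>\<ell>)\<close> uses first-child links only and
  traces a left-corner cycle. Conversely, if \<open>A \<rightarrow>\<^sub>L\<^sup>+ A\<close>, take a derivation through a useful
  rule \<open>A \<rightarrow> \<alpha>\<close> and let \<open>\<ell>\<close> end with the first terminal \<open>a\<close> derived from \<open>\<alpha>\<close>. Then a goal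
  \<open>p(A\<delta>, a, \<epsilon>)\<close> is reachable from \<open>q(\<ell>)\<close>, every nonterminal on the left-corner cycle
  parses \<open>a\<close>, and the first-child links around the cycle close up in \<open>Expl(G\<^sub>\<ell>)\<close>.\<close>

inductive yields :: "('n \<times> ('n,'t) sym list) set \<Rightarrow> ('n,'t) sym list \<Rightarrow> 't list \<Rightarrow> bool"
  for R where
  yields_Nil: "yields R [] []"
| yields_Tm: "yields R \<beta> w \<Longrightarrow> yields R (Tm a # \<beta>) (a # w)"
| yields_NT: "(A,\<alpha>) \<in> R \<Longrightarrow> yields R \<alpha> x \<Longrightarrow> yields R \<beta> y \<Longrightarrow> yields R (NT A # \<beta>) (x @ y)"

inductive_simps yields_Nil_iff: "yields R [] w"
inductive_simps yields_Tm_iff: "yields R (Tm a # \<beta>) w"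
inductive_simps yields_NT_iff: "yields R (NT A # \<beta>) w"

lemma yields_append_iff:
  "yields R (p @ q) w \<longleftrightarrow> (\<exists>w1 w2. w = w1 @ w2 \<and> yields R p w1 \<and> yields R q w2)"
proof (induction p arbitrary: w)
  case (Cons X p)
  show ?case
  proof (cases X)
    case (NT A)
    show ?thesis
    proof
      assume "yields R ((X # p) @ q) w"
      then obtain \<alpha> x y1 y2 where "(A,\<alpha>) \<in> R" "yields R \<alpha> x" "yields R p y1"
        "yields R q y2" "w = x @ y1 @ y2"
        unfolding NT by (auto simp: yields_NT_iff Cons.IH)
      then show "\<exists>w1 w2. w = w1 @ w2 \<and> yields R (X # p) w1 \<and> yields R q w2"
        unfolding NT by (intro exI[of _ "x @ y1"] exI[of _ y2]) (auto intro: yields_NT)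
    next
      assume "\<exists>w1 w2. w = w1 @ w2 \<and> yields R (X # p) w1 \<and> yields R q w2"
      then obtain \<alpha> x y w2 where "(A,\<alpha>) \<in> R" "yields R \<alpha> x" "yields R p y"
        "yields R q w2" "w = x @ y @ w2"
        unfolding NT by (auto simp: yields_NT_iff)
      moreover have "yields R (p @ q) (y @ w2)"
        using Cons.IH \<open>yields R p y\<close> \<open>yields R q w2\<close> by blast
      ultimately show "yields R ((X # p) @ q) w"
        unfolding NT using yields_NT[of A \<alpha> R x "p @ q" "y @ w2"] by simp
    qed
  next
    case (Tm a)
    show ?thesis
    proof
      assume "yields R ((X # p) @ q) w"
      then obtain y1 y2 where "yields R p y1" "yields R q y2" "w = a # y1 @ y2"
        unfolding Tm by (auto simp: yields_Tm_iff Cons.IH)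
      then show "\<exists>w1 w2. w = w1 @ w2 \<and> yields R (X # p) w1 \<and> yields R q w2"
        unfolding Tm by (intro exI[of _ "a # y1"] exI[of _ y2]) (simp add: yields_Tm)
    next
      assume "\<exists>w1 w2. w = w1 @ w2 \<and> yields R (X # p) w1 \<and> yields R q w2"
      then obtain y w2 where "yields R p y" "yields R q w2" "w = a # y @ w2"
        unfolding Tm by (auto simp: yields_Tm_iff)
      then show "yields R ((X # p) @ q) w"
        unfolding Tm using Cons.IH by (auto intro: yields_Tm)
    qed
  qed
qed (simp add: yields_Nil_iff)

lemma yields_map_Tm: "yields R (map Tm w) w"
  by (induction w) (auto intro: yields.intros)

lemma dstep_yields: "dstep R x y \<Longrightarrow> yields R y w \<Longrightarrow> yields R x w"
  unfolding dstep_def by (auto simp: yields_append_iff yields_NT_iff) (metis append.assoc)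

lemma rtranclp_dstep_yields: "(dstep R)\<^sup>*\<^sup>* x y \<Longrightarrow> yields R y w \<Longrightarrow> yields R x w"
  by (induction rule: converse_rtranclp_induct) (auto intro: dstep_yields)

text \<open>\<open>lm_reaches R \<gamma> x A \<delta>\<close>: there is a leftmost derivation \<open>\<gamma> \<Rightarrow>\<^sup>* x A \<delta>\<close>, organised like the
  parser: it either descends into the first nonterminal or skips a complete derivation of it.\<close>

inductive lm_reaches ::
  "('n \<times> ('n,'t) sym list) set \<Rightarrow> ('n,'t) sym list \<Rightarrow> 't list \<Rightarrow> 'n \<Rightarrow> ('n,'t) sym list \<Rightarrow> bool"
  for R where
  lm_here: "lm_reaches R (NT A # \<delta>) [] A \<delta>"
| lm_Tm: "lm_reaches R \<beta> x A \<delta> \<Longrightarrow> lm_reaches R (Tm a # \<beta>) (a # x) A \<delta>"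
| lm_expand: "(B,\<alpha>) \<in> R \<Longrightarrow> lm_reaches R \<alpha> x A \<delta> \<Longrightarrow> lm_reaches R (NT B # \<beta>) x A (\<delta> @ \<beta>)"
| lm_skip: "(B,\<alpha>) \<in> R \<Longrightarrow> yields R \<alpha> x1 \<Longrightarrow> lm_reaches R \<beta> x2 A \<delta> \<Longrightarrow>
    lm_reaches R (NT B # \<beta>) (x1 @ x2) A \<delta>"

lemma lm_reaches_append_cases:
  assumes "lm_reaches R (p @ q) x A \<delta>"
  shows "(\<exists>\<delta>1. lm_reaches R p x A \<delta>1 \<and> \<delta> = \<delta>1 @ q) \<or>
    (\<exists>x1 x2. x = x1 @ x2 \<and> yields R p x1 \<and> lm_reaches R q x2 A \<delta>)"
  using assms
proof (induction p arbitrary: x \<delta>)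
  case Nil
  then show ?case by (intro disjI2 exI[of _ "[]"] exI[of _ x]) (auto intro: yields_Nil)
next
  case (Cons X p)
  show ?case
  proof (cases X)
    case (Tm a)
    from Cons.prems obtain x' where x: "x = a # x'" and reach: "lm_reaches R (p @ q) x' A \<delta>"
      unfolding Tm by (auto elim: lm_reaches.cases)
    from Cons.IH[OF reach] show ?thesis
      unfolding Tm x by (auto intro: lm_Tm) (metis append_Cons yields_Tm)
  next
    case (NT B)
    from Cons.prems[unfolded NT] show ?thesis
    proof (cases rule: lm_reaches.cases)
      case (lm_skip B' \<alpha> x1 \<beta> x2)
      then have "lm_reaches R (p @ q) x2 A \<delta>" using NT by simp
      from Cons.IH[OF this] show ?thesis
      proof
        assume "\<exists>y1 y2. x2 = y1 @ y2 \<and> yields R p y1 \<and> lm_reaches R q y2 A \<delta>"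
        then obtain y1 y2 where "x2 = y1 @ y2" "yields R p y1" "lm_reaches R q y2 A \<delta>" by blast
        then show ?thesis using lm_skip NT
          by (intro disjI2 exI[of _ "x1 @ y1"] exI[of _ y2]) (auto intro: yields_NT)
      qed (use lm_skip NT in \<open>auto intro: lm_reaches.intros\<close>)
    qed (use NT in \<open>auto intro: lm_reaches.intros\<close>)
  qed
qed

lemma lm_reaches_append_right: "lm_reaches R p x A \<delta> \<Longrightarrow> lm_reaches R (p @ q) x A (\<delta> @ q)"
proof (induction rule: lm_reaches.induct)
  case (lm_expand B \<alpha> x A \<delta> \<beta>)
  then show ?case using lm_reaches.lm_expand[of B \<alpha> R x A \<delta> "\<beta> @ q"] by simp
qed (auto intro: lm_reaches.intros)

lemma lm_reaches_prepend_yields: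
  "yields R p x1 \<Longrightarrow> lm_reaches R q x2 A \<delta> \<Longrightarrow> lm_reaches R (p @ q) (x1 @ x2) A \<delta>"
proof (induction rule: yields.induct)
  case (yields_NT B \<alpha> x \<beta> y)
  then show ?case using lm_skip[of B \<alpha> R x "\<beta> @ q" "y @ x2" A \<delta>] by simp
qed (auto intro: lm_Tm)

lemma yields_lm_reaches: "yields R \<gamma> x \<Longrightarrow> lm_reaches R (\<gamma> @ NT A # \<delta>) x A \<delta>"
  using lm_reaches_prepend_yields[OF _ lm_here, of R \<gamma> x A \<delta>] by simp

lemma dstep_lm_reaches:
  assumes "dstep R \<rho> \<rho>'" and "lm_reaches R \<rho>' x A \<delta>"
  shows "\<exists>\<delta>'. lm_reaches R \<rho> x A \<delta>'"
proof -
  from assms obtain p q B \<alpha> where rule: "(B,\<alpha>) \<in> R" and \<rho>: "\<rho> = p @ NT B # q"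
    and reach: "lm_reaches R (p @ (\<alpha> @ q)) x A \<delta>"
    unfolding dstep_def by auto
  from lm_reaches_append_cases[OF reach] show ?thesis
  proof
    assume "\<exists>\<delta>1. lm_reaches R p x A \<delta>1 \<and> \<delta> = \<delta>1 @ \<alpha> @ q"
    then show ?thesis unfolding \<rho> using lm_reaches_append_right[of R p x A _ "NT B # q"] by blast
  next
    assume "\<exists>x1 x2. x = x1 @ x2 \<and> yields R p x1 \<and> lm_reaches R (\<alpha> @ q) x2 A \<delta>"
    then obtain x1 x2 where x: "x = x1 @ x2" "yields R p x1"
      and reach2: "lm_reaches R (\<alpha> @ q) x2 A \<delta>" by blast
    from lm_reaches_append_cases[OF reach2] rule have "\<exists>\<delta>'. lm_reaches R (NT B # q) x2 A \<delta>'"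
      by (auto intro: lm_expand lm_skip)
    then show ?thesis unfolding \<rho> x using lm_reaches_prepend_yields[OF x(2)] by blast
  qed
qed

lemma rtranclp_dstep_lm_reaches:
  "(dstep R)\<^sup>*\<^sup>* \<rho> \<sigma> \<Longrightarrow> lm_reaches R \<sigma> x A \<delta> \<Longrightarrow> \<exists>\<delta>'. lm_reaches R \<rho> x A \<delta>'"
proof (induction arbitrary: \<delta> rule: converse_rtranclp_induct)
  case (step \<rho> \<rho>')
  then show ?case using dstep_lm_reaches by metis
qed blast

lemma NT_in_syms_iff [simp]: "NT A \<in> syms N \<Sigma> \<longleftrightarrow> A \<in> N"
  and Tm_in_syms_iff [simp]: "Tm a \<in> syms N \<Sigma> \<longleftrightarrow> a \<in> \<Sigma>"
  unfolding syms_def by auto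

lemma provable_by_clause:
  "clause N \<Sigma> R s l H B \<Longrightarrow> (\<And>b. b \<in> set B \<Longrightarrow> is_Pa b \<Longrightarrow> provable N \<Sigma> R s l b) \<Longrightarrow>
    provable N \<Sigma> R s l H"
  by (rule provable.intros) (auto elim!: clause.cases)

lemma usable_clause_provable: "usable_clause N \<Sigma> R s l H B \<Longrightarrow> provable N \<Sigma> R s l H"
  unfolding usable_clause_def by (blast intro: provable_by_clause)

lemma expl_parent_child_Pa: "expl_parent N \<Sigma> R s l H C \<Longrightarrow> \<exists>\<gamma> u w. C = Pa \<gamma> u w"
proof -
  assume "expl_parent N \<Sigma> R s l H C"
  then obtain B where "clause N \<Sigma> R s l H B" and "C \<in> set B" and "defined_goal N \<Sigma> R s l C"
    unfolding expl_parent_def usable_clause_def by blast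
  moreover from \<open>defined_goal N \<Sigma> R s l C\<close> have "\<not> is_Ma C"
    by (induction rule: defined_goal.induct) (auto elim: is_Pa.elims)
  ultimately show ?thesis by (cases rule: clause.cases) auto
qed

definition parses_prefix where
  "parses_prefix N \<Sigma> R s l A u \<longleftrightarrow> (\<exists>\<alpha>. (A,\<alpha>) \<in> R \<and> provable N \<Sigma> R s l (Pa \<alpha> u []))"

definition expands_first :: "('n \<times> ('n,'t) sym list) set \<Rightarrow> ('n,'t) sym list \<Rightarrow> ('n,'t) sym list \<Rightarrow> bool"
  where "expands_first R \<gamma> \<gamma>' \<longleftrightarrow> (\<exists>B \<beta>. \<gamma> = NT B # \<beta> \<and> (B, \<gamma>') \<in> R)"

lemma expands_first_tranclp_lc:
  "(expands_first R)\<^sup>+\<^sup>+ \<gamma> \<gamma>' \<Longrightarrow>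
    \<exists>B \<beta>. \<gamma> = NT B # \<beta> \<and> (\<forall>B' \<beta>'. \<gamma>' = NT B' # \<beta>' \<longrightarrow> (lc_direct R)\<^sup>+\<^sup>+ B B')"
proof (induction rule: tranclp_induct)
  case (base \<gamma>')
  then obtain B \<beta> where \<gamma>: "\<gamma> = NT B # \<beta>" and rule: "(B, \<gamma>') \<in> R"
    unfolding expands_first_def by blast
  show ?case
  proof (intro exI conjI allI impI)
    fix B' \<beta>' assume "\<gamma>' = NT B' # \<beta>'"
    with rule have "lc_direct R B B'" unfolding lc_direct_def by blast
    then show "(lc_direct R)\<^sup>+\<^sup>+ B B'" ..
  qed (rule \<gamma>)
next
  case (step \<gamma>' \<gamma>'')
  then obtain B \<beta> where \<gamma>: "\<gamma> = NT B # \<beta>"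
    and IH: "\<forall>B' \<beta>'. \<gamma>' = NT B' # \<beta>' \<longrightarrow> (lc_direct R)\<^sup>+\<^sup>+ B B'"
    by blast
  from step(2) obtain C \<beta>' where "\<gamma>' = NT C # \<beta>'" and rule: "(C, \<gamma>'') \<in> R"
    unfolding expands_first_def by blast
  with IH have BC: "(lc_direct R)\<^sup>+\<^sup>+ B C" by blast
  show ?case
  proof (intro exI conjI allI impI)
    fix B' \<beta>'' assume "\<gamma>'' = NT B' # \<beta>''"
    with rule have "lc_direct R C B'" unfolding lc_direct_def by blast
    with BC show "(lc_direct R)\<^sup>+\<^sup>+ B B'" ..
  qed (rule \<gamma>)
qed

context
  fixes N :: "'n set" and \<Sigma> :: "'t set" and R :: "('n \<times> ('n,'t) sym list) set" and s :: 'n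
  assumes cfg: "cfg N \<Sigma> R s"
begin

lemma rule_wf: "(A,\<alpha>) \<in> R \<Longrightarrow> A \<in> N \<and> \<alpha> \<noteq> [] \<and> set \<alpha> \<subseteq> syms N \<Sigma>"
  using cfg unfolding cfg_def by blast

lemma yields_nonempty: "yields R \<gamma> w \<Longrightarrow> \<gamma> \<noteq> [] \<Longrightarrow> w \<noteq> []"
  by (induction rule: yields.induct) (auto dest: rule_wf)

lemma provable_suffix:
  "yields R \<gamma> x \<Longrightarrow> set \<gamma> \<subseteq> syms N \<Sigma> \<Longrightarrow> set x \<subseteq> \<Sigma> \<Longrightarrow> set v \<subseteq> \<Sigma> \<Longrightarrow>
    provable N \<Sigma> R s l (Pa \<gamma> (x @ v) v)"
proof (induction arbitrary: v rule: yields.induct)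
  case yields_Nil
  then show ?case by (auto intro: provable_by_clause C1)
next
  case (yields_Tm \<beta> w a)
  then have a: "a \<in> \<Sigma>" and \<beta>: "set \<beta> \<subseteq> syms N \<Sigma>" and w: "set w \<subseteq> \<Sigma>" by auto
  show ?case
  proof (cases "w @ v = []")
    case True
    then show ?thesis by (auto intro: provable_by_clause C2a[OF a \<beta>])
  next
    case False
    with yields_Tm a \<beta> w show ?thesis
      by (auto intro!: provable_by_clause[OF C2b[OF a \<beta> _ _ False, simplified]])
  qed
next
  case (yields_NT A \<alpha> x \<beta> y)
  from rule_wf[OF yields_NT(1)] have A: "A \<in> N" and \<alpha>: "set \<alpha> \<subseteq> syms N \<Sigma>" by auto
  from yields_NT.prems have \<beta>: "set \<beta> \<subseteq> syms N \<Sigma>" and x: "set x \<subseteq> \<Sigma>" and yv: "set (y @ v) \<subseteq> \<Sigma>"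
    by auto
  have p\<alpha>: "provable N \<Sigma> R s l (Pa \<alpha> (x @ y @ v) (y @ v))" using yields_NT.IH(1)[OF \<alpha> x yv] .
  have p\<beta>: "provable N \<Sigma> R s l (Pa \<beta> (y @ v) v)" using yields_NT.IH(2) yields_NT.prems by simp
  show ?case
  proof (cases "y @ v = []")
    case True
    with p\<alpha> show ?thesis
      using x yv by (auto intro!: provable_by_clause[OF C3a[OF A yields_NT(1) \<beta>]])
  next
    case False
    with p\<alpha> p\<beta> show ?thesis
      using x yv yields_NT.prems(3)
      by (auto intro!: provable_by_clause[OF C3b[OF A yields_NT(1) \<beta> _ yv _ False, simplified]])
  qed
qed

lemma provable_prefix:
  "yields R \<gamma> (u @ r) \<Longrightarrow> u \<noteq> [] \<Longrightarrow> set \<gamma> \<subseteq> syms N \<Sigma> \<Longrightarrow> set u \<subseteq> \<Sigma> \<Longrightarrow>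
    provable N \<Sigma> R s l (Pa \<gamma> u [])"
proof (induction \<gamma> "u @ r" arbitrary: u r rule: yields.induct)
  case (yields_Tm \<beta> w a)
  then obtain u' where u: "u = a # u'" "w = u' @ r" by (cases u) auto
  with yields_Tm.prems have a: "a \<in> \<Sigma>" and \<beta>: "set \<beta> \<subseteq> syms N \<Sigma>" and u': "set u' \<subseteq> \<Sigma>"
    by auto
  show ?case
  proof (cases "u' = []")
    case True
    then show ?thesis unfolding u by (auto intro: provable_by_clause C2a[OF a \<beta>])
  next
    case False
    then show ?thesis unfolding u using yields_Tm.hyps(2)[OF u(2) False \<beta> u']
      by (auto intro!: provable_by_clause[OF C2b[OF a \<beta> u' _ False]])
  qed
next
  case (yields_NT A \<alpha> x \<beta> y)
  from rule_wf[OF yields_NT(1)] have A: "A \<in> N" and \<alpha>: "set \<alpha> \<subseteq> syms N \<Sigma>" by auto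
  from yields_NT.prems have \<beta>: "set \<beta> \<subseteq> syms N \<Sigma>" by simp
  note by_C3a = provable_by_clause[OF C3a[OF A yields_NT(1) \<beta> yields_NT.prems(3)]]
  from \<open>x @ y = u @ r\<close>
  have "(\<exists>us. x = u @ us) \<or> (\<exists>us. us \<noteq> [] \<and> u = x @ us \<and> y = us @ r)"
    by (auto simp: append_eq_append_conv2)
  then show ?case
  proof
    assume "\<exists>us. x = u @ us"
    then have "provable N \<Sigma> R s l (Pa \<alpha> u [])"
      using yields_NT.hyps(3) yields_NT.prems \<alpha> by blast
    then show ?thesis by (intro by_C3a) auto
  next
    assume "\<exists>us. us \<noteq> [] \<and> u = x @ us \<and> y = us @ r"
    then obtain us where us: "us \<noteq> []" "u = x @ us" "y = us @ r" by blast
    with yields_NT.prems have x: "set x \<subseteq> \<Sigma>" and us\<Sigma>: "set us \<subseteq> \<Sigma>" by auto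
    have "provable N \<Sigma> R s l (Pa \<alpha> (x @ us) us)"
      using provable_suffix yields_NT.hyps(2) \<alpha> x us\<Sigma> .
    moreover have "provable N \<Sigma> R s l (Pa \<beta> us [])"
      using yields_NT.hyps(5) us \<beta> us\<Sigma> by blast
    ultimately show ?thesis
      using us x us\<Sigma> by (auto intro!: provable_by_clause[OF C3b[OF A yields_NT(1) \<beta> _ us\<Sigma> _ us(1)]])
  qed
qed simp

lemma provable_NT_if_parses_prefix:
  "parses_prefix N \<Sigma> R s l A u \<Longrightarrow> set \<beta> \<subseteq> syms N \<Sigma> \<Longrightarrow> set u \<subseteq> \<Sigma> \<Longrightarrow>
    provable N \<Sigma> R s l (Pa (NT A # \<beta>) u [])"
  unfolding parses_prefix_def by (auto dest: rule_wf intro!: provable_by_clause[OF C3a])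

lemma parses_prefix_left_corner:
  "(lc_direct R)\<^sup>*\<^sup>* B C \<Longrightarrow> parses_prefix N \<Sigma> R s l C u \<Longrightarrow> set u \<subseteq> \<Sigma> \<Longrightarrow>
    parses_prefix N \<Sigma> R s l B u"
proof (induction rule: converse_rtranclp_induct)
  case (step B B')
  then obtain \<beta> where rule: "(B, NT B' # \<beta>) \<in> R" unfolding lc_direct_def by blast
  moreover have "set \<beta> \<subseteq> syms N \<Sigma>" using rule_wf[OF rule] by simp
  ultimately have "provable N \<Sigma> R s l (Pa (NT B' # \<beta>) u [])"
    using step by (auto intro: provable_NT_if_parses_prefix)
  with rule show ?case unfolding parses_prefix_def by blast
qed

text \<open>Following the derivation \<open>\<gamma> \<Rightarrow>\<^sup>* x A \<delta>\<close>, the parser on input \<open>x @ u\<close> reaches a goal for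
  \<open>A\<close> with exactly \<open>u\<close> left; the sibling goals met on the way are provable because each one
  parses a complete derivation.\<close>

lemma lm_reaches_defined_goal:
  assumes "lm_reaches R \<gamma> x A \<delta>" and "set \<gamma> \<subseteq> syms N \<Sigma>" and "set x \<subseteq> \<Sigma>"
    and u: "set u \<subseteq> \<Sigma>" "u \<noteq> []" and A: "parses_prefix N \<Sigma> R s l A u"
  shows "provable N \<Sigma> R s l (Pa \<gamma> (x @ u) []) \<and>
    (defined_goal N \<Sigma> R s l (Pa \<gamma> (x @ u) []) \<longrightarrow>
      (\<exists>\<delta>'. set \<delta>' \<subseteq> syms N \<Sigma> \<and> defined_goal N \<Sigma> R s l (Pa (NT A # \<delta>') u [])))"
  using assms(1-3) A
proof (induction rule: lm_reaches.induct)
  case (lm_here A \<delta>)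
  then show ?case using u by (auto intro: provable_NT_if_parses_prefix)
next
  case (lm_Tm \<beta> x A \<delta> a)
  then have a: "a \<in> \<Sigma>" and \<beta>: "set \<beta> \<subseteq> syms N \<Sigma>" and x: "set x \<subseteq> \<Sigma>" by auto
  note IH = lm_Tm.IH[OF \<beta> x lm_Tm.prems(3)]
  have cl: "usable_clause N \<Sigma> R s l (Pa (Tm a # \<beta>) (a # x @ u) []) [Pa \<beta> (x @ u) []]"
    unfolding usable_clause_def using a \<beta> x u IH by (auto intro!: C2b)
  show ?case using IH usable_clause_provable[OF cl] defined_goal.step[OF _ cl] by auto
next
  case (lm_expand B \<alpha> x A \<delta> \<beta>)
  from rule_wf[OF lm_expand(1)] have B: "B \<in> N" and \<alpha>: "set \<alpha> \<subseteq> syms N \<Sigma>" by auto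
  from lm_expand.prems have \<beta>: "set \<beta> \<subseteq> syms N \<Sigma>" and x: "set x \<subseteq> \<Sigma>" by auto
  note IH = lm_expand.IH[OF \<alpha> x lm_expand.prems(3)]
  have cl: "usable_clause N \<Sigma> R s l (Pa (NT B # \<beta>) (x @ u) []) [Ma (B,\<alpha>), Pa \<alpha> (x @ u) []]"
    unfolding usable_clause_def using lm_expand(1) B \<beta> x u IH by (auto intro!: C3a)
  show ?case using IH usable_clause_provable[OF cl] defined_goal.step[OF _ cl] by auto
next
  case (lm_skip B \<alpha> x1 \<beta> x2 A \<delta>)
  from rule_wf[OF lm_skip(1)] have B: "B \<in> N" and \<alpha>: "set \<alpha> \<subseteq> syms N \<Sigma>" by auto
  from lm_skip.prems have \<beta>: "set \<beta> \<subseteq> syms N \<Sigma>" and x: "set x1 \<subseteq> \<Sigma>" "set x2 \<subseteq> \<Sigma>" by auto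
  note IH = lm_skip.IH[OF \<beta> x(2) lm_skip.prems(3)]
  have "provable N \<Sigma> R s l (Pa \<alpha> (x1 @ x2 @ u) (x2 @ u))"
    using provable_suffix lm_skip(2) \<alpha> x u by simp
  then have cl: "usable_clause N \<Sigma> R s l (Pa (NT B # \<beta>) (x1 @ x2 @ u) [])
      [Ma (B,\<alpha>), Pa \<alpha> (x1 @ x2 @ u) (x2 @ u), Pa \<beta> (x2 @ u) []]"
    unfolding usable_clause_def using lm_skip(1) B \<beta> x u IH by (auto intro!: C3b)
  show ?case using IH usable_clause_provable[OF cl] defined_goal.step[OF _ cl] by auto
qed

lemma expl_parent_left_corner:
  assumes rule: "(B, NT C # \<beta>) \<in> R" and goal: "defined_goal N \<Sigma> R s l (Pa (NT B # \<delta>) u [])"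
    and "set \<delta> \<subseteq> syms N \<Sigma>" and "set u \<subseteq> \<Sigma>" and "parses_prefix N \<Sigma> R s l C u"
  shows "expl_parent N \<Sigma> R s l (Pa (NT B # \<delta>) u []) (Pa (NT C # \<beta>) u [])"
proof -
  from rule_wf[OF rule] have "B \<in> N" "set \<beta> \<subseteq> syms N \<Sigma>" by auto
  with assms have "usable_clause N \<Sigma> R s l (Pa (NT B # \<delta>) u [])
      [Ma (B, NT C # \<beta>), Pa (NT C # \<beta>) u []]"
    unfolding usable_clause_def by (auto intro!: C3a provable_NT_if_parses_prefix)
  with goal show ?thesis unfolding expl_parent_def by (auto intro: defined_goal.step)
qed

lemma expl_path_left_corner:
  "(lc_direct R)\<^sup>*\<^sup>* B C \<Longrightarrow> parses_prefix N \<Sigma> R s l C u \<Longrightarrow> set u \<subseteq> \<Sigma> \<Longrightarrow>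
    defined_goal N \<Sigma> R s l (Pa (NT B # \<delta>) u []) \<Longrightarrow> set \<delta> \<subseteq> syms N \<Sigma> \<Longrightarrow>
    \<exists>\<delta>'. set \<delta>' \<subseteq> syms N \<Sigma> \<and> defined_goal N \<Sigma> R s l (Pa (NT C # \<delta>') u []) \<and>
      (expl_parent N \<Sigma> R s l)\<^sup>*\<^sup>* (Pa (NT B # \<delta>) u []) (Pa (NT C # \<delta>') u [])"
proof (induction arbitrary: \<delta> rule: converse_rtranclp_induct)
  case (step B B')
  then obtain \<beta> where rule: "(B, NT B' # \<beta>) \<in> R" unfolding lc_direct_def by blast
  have "parses_prefix N \<Sigma> R s l B' u" using parses_prefix_left_corner step by blast
  with rule step.prems have edge: "expl_parent N \<Sigma> R s l (Pa (NT B # \<delta>) u []) (Pa (NT B' # \<beta>) u [])"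
    by (blast intro: expl_parent_left_corner)
  moreover have "set \<beta> \<subseteq> syms N \<Sigma>" using rule_wf[OF rule] by simp
  moreover have "defined_goal N \<Sigma> R s l (Pa (NT B' # \<beta>) u [])"
    using edge unfolding expl_parent_def by blast
  ultimately show ?case using step.IH step.prems by (meson converse_rtranclp_into_rtranclp)
qed blast

lemma expl_cyclic_if_lc_cycle:
  assumes lc_cycle: "(lc_direct R)\<^sup>+\<^sup>+ A A" and A: "parses_prefix N \<Sigma> R s l A u"
    and u: "set u \<subseteq> \<Sigma>" and goal: "defined_goal N \<Sigma> R s l (Pa (NT A # \<delta>) u [])"
    and \<delta>: "set \<delta> \<subseteq> syms N \<Sigma>"
  shows "expl_cyclic N \<Sigma> R s l"
proof -
  from lc_cycle obtain A' where "lc_direct R A A'" and A_reach: "(lc_direct R)\<^sup>*\<^sup>* A' A"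
    by (metis tranclpD)
  then obtain \<beta> where rule: "(A, NT A' # \<beta>) \<in> R" unfolding lc_direct_def by blast
  have A': "parses_prefix N \<Sigma> R s l A' u" using parses_prefix_left_corner A_reach A u .
  let ?X = "Pa (NT A' # \<beta>) u []"
  have "expl_parent N \<Sigma> R s l (Pa (NT A # \<delta>) u []) ?X"
    using expl_parent_left_corner rule goal \<delta> u A' .
  then have "defined_goal N \<Sigma> R s l ?X" unfolding expl_parent_def by blast
  moreover have "set \<beta> \<subseteq> syms N \<Sigma>" using rule_wf[OF rule] by simp
  ultimately obtain \<delta>' where \<delta>': "set \<delta>' \<subseteq> syms N \<Sigma>"
    and goal': "defined_goal N \<Sigma> R s l (Pa (NT A # \<delta>') u [])"
    and path: "(expl_parent N \<Sigma> R s l)\<^sup>*\<^sup>* ?X (Pa (NT A # \<delta>') u [])"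
    using expl_path_left_corner[OF A_reach A u] by blast
  have "expl_parent N \<Sigma> R s l (Pa (NT A # \<delta>') u []) ?X"
    using expl_parent_left_corner rule goal' \<delta>' u A' .
  with path show ?thesis unfolding expl_cyclic_def by (meson rtranclp_into_tranclp1)
qed

lemma useful_nt_prefix:
  assumes "A \<in> N" and "\<not> useless_nt \<Sigma> R s A"
  obtains \<alpha> a w w1 \<delta> where "(A,\<alpha>) \<in> R" and "yields R \<alpha> (a # w)" and "lm_reaches R [NT s] w1 A \<delta>"
    and "is_prefix \<Sigma> R s (w1 @ [a])" and "set (w1 @ [a]) \<subseteq> \<Sigma>"
proof -
  from assms obtain \<alpha> \<gamma> \<delta> w where rule: "(A,\<alpha>) \<in> R" and w: "set w \<subseteq> \<Sigma>"
    and to_A: "(dstep R)\<^sup>*\<^sup>* [NT s] (\<gamma> @ [NT A] @ \<delta>)"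
    and from_\<alpha>: "(dstep R)\<^sup>*\<^sup>* (\<gamma> @ \<alpha> @ \<delta>) (map Tm w)"
    unfolding useless_nt_def useless_rule_def by auto
  from rtranclp_dstep_yields[OF from_\<alpha> yields_map_Tm] obtain w1 w2 w3 where
    split: "w = w1 @ w2 @ w3" and \<gamma>: "yields R \<gamma> w1" and \<alpha>: "yields R \<alpha> w2"
    by (auto simp: yields_append_iff)
  with rule_wf[OF rule] obtain a w2' where w2: "w2 = a # w2'"
    using yields_nonempty by (cases w2) auto
  have "dstep R (\<gamma> @ [NT A] @ \<delta>) (\<gamma> @ \<alpha> @ \<delta>)" unfolding dstep_def using rule by blast
  with to_A from_\<alpha> have "(dstep R)\<^sup>*\<^sup>* [NT s] (map Tm w)" by (meson rtranclp_trans r_into_rtranclp)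
  then have prefix: "is_prefix \<Sigma> R s (w1 @ [a])"
    unfolding is_prefix_def using w split w2 by (intro conjI exI[of _ w] exI[of _ "w2' @ w3"]) auto
  obtain \<delta>' where "lm_reaches R [NT s] w1 A \<delta>'"
    using rtranclp_dstep_lm_reaches[OF to_A[simplified] yields_lm_reaches[OF \<gamma>]] by blast
  show ?thesis by (rule that[OF rule \<alpha>[unfolded w2] \<open>lm_reaches R [NT s] w1 A \<delta>'\<close> prefix])
    (use w split w2 in simp)
qed

lemma useful_nt_defined_goal:
  assumes "A \<in> N" and "\<not> useless_nt \<Sigma> R s A"
  obtains l u \<delta> where "is_prefix \<Sigma> R s l" and "set u \<subseteq> \<Sigma>" and "parses_prefix N \<Sigma> R s l A u"
    and "set \<delta> \<subseteq> syms N \<Sigma>" and "defined_goal N \<Sigma> R s l (Pa (NT A # \<delta>) u [])"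
proof -
  obtain \<alpha> a w w1 \<delta> where rule: "(A,\<alpha>) \<in> R" and \<alpha>: "yields R \<alpha> (a # w)"
    and reach: "lm_reaches R [NT s] w1 A \<delta>" and prefix: "is_prefix \<Sigma> R s (w1 @ [a])"
    and \<Sigma>: "set (w1 @ [a]) \<subseteq> \<Sigma>"
    using useful_nt_prefix assms by blast
  let ?l = "w1 @ [a]"
  have "provable N \<Sigma> R s ?l (Pa \<alpha> [a] [])"
    using provable_prefix[of \<alpha> "[a]" w] \<alpha> rule_wf[OF rule] \<Sigma> by simp
  with rule have A: "parses_prefix N \<Sigma> R s ?l A [a]" unfolding parses_prefix_def by blast
  have "set [NT s] \<subseteq> syms N \<Sigma>" using cfg unfolding cfg_def by simp
  with reach A \<Sigma> have start: "provable N \<Sigma> R s ?l (Pa [NT s] ?l [])"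
    and descend: "defined_goal N \<Sigma> R s ?l (Pa [NT s] ?l []) \<Longrightarrow>
      \<exists>\<delta>'. set \<delta>' \<subseteq> syms N \<Sigma> \<and> defined_goal N \<Sigma> R s ?l (Pa (NT A # \<delta>') [a] [])"
    using lm_reaches_defined_goal[of "[NT s]" w1 A \<delta> "[a]" ?l] by auto
  have "usable_clause N \<Sigma> R s ?l (Qa ?l) [Pa [NT s] ?l []]"
    unfolding usable_clause_def using start by (auto intro: C0)
  then have "defined_goal N \<Sigma> R s ?l (Pa [NT s] ?l [])"
    by (auto intro: defined_goal.step[OF defined_goal.root])
  then obtain \<delta>' where \<delta>': "set \<delta>' \<subseteq> syms N \<Sigma>"
    and goal: "defined_goal N \<Sigma> R s ?l (Pa (NT A # \<delta>') [a] [])"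
    using descend by blast
  show ?thesis by (rule that[OF prefix _ A \<delta>' goal]) (use \<Sigma> in simp)
qed

lemma provable_Pa_consumes:
  "provable N \<Sigma> R s l H \<Longrightarrow> H = Pa \<gamma> u v \<Longrightarrow>
    length v \<le> length u \<and> (\<gamma> \<noteq> [] \<longrightarrow> length v < length u)"
proof (induction arbitrary: \<gamma> u v rule: provable.induct)
  case (1 H B)
  have IH: "length v \<le> length u \<and> (\<gamma> \<noteq> [] \<longrightarrow> length v < length u)"
    if "Pa \<gamma> u v \<in> set B" for \<gamma> u v
    using 1(2) that by auto
  from 1(1) show ?case
  proof (cases rule: clause.cases)
    case (C3a A \<alpha> \<beta> u')
    with rule_wf have "\<alpha> \<noteq> []" by blast
    with IH[of \<alpha> u' "[]"] 1(3) C3a show ?thesis by auto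
  next
    case (C3b A \<alpha> \<beta> u' v' w')
    with rule_wf have "\<alpha> \<noteq> []" by blast
    with IH[of \<alpha> u' v'] IH[of \<beta> v' w'] 1(3) C3b show ?thesis by auto
  qed (use 1 in auto)
qed

lemma expl_parent_Pa:
  assumes "expl_parent N \<Sigma> R s l (Pa \<gamma> u w) (Pa \<gamma>' u' w')"
  shows "length u' < length u \<or> length u' = length u \<and> expands_first R \<gamma> \<gamma>'"
proof -
  from assms obtain B where cl: "clause N \<Sigma> R s l (Pa \<gamma> u w) B"
    and provable: "\<forall>b\<in>set B. is_Pa b \<longrightarrow> provable N \<Sigma> R s l b" and child: "Pa \<gamma>' u' w' \<in> set B"
    unfolding expl_parent_def usable_clause_def by blast
  from cl show ?thesis
  proof (cases rule: clause.cases)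
    case (C3b A \<alpha> \<beta> v)
    from C3b provable have "provable N \<Sigma> R s l (Pa \<alpha> u v)" by simp
    moreover from C3b rule_wf have "\<alpha> \<noteq> []" by blast
    ultimately have "length v < length u" using provable_Pa_consumes by blast
    then show ?thesis using C3b child unfolding expands_first_def by auto
  qed (use child in \<open>auto simp: expands_first_def\<close>)
qed

lemma expl_parent_tranclp_Pa:
  "(expl_parent N \<Sigma> R s l)\<^sup>+\<^sup>+ (Pa \<gamma> u w) Y \<Longrightarrow>
    \<exists>\<gamma>' u' w'. Y = Pa \<gamma>' u' w' \<and>
      (length u' < length u \<or> length u' = length u \<and> (expands_first R)\<^sup>+\<^sup>+ \<gamma> \<gamma>')"
proof (induction rule: tranclp_induct)
  case (base Y)
  from expl_parent_child_Pa[OF base] obtain \<gamma>' u' w' where Y: "Y = Pa \<gamma>' u' w'" by blast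
  have "length u' < length u \<or> length u' = length u \<and> expands_first R \<gamma> \<gamma>'"
    using expl_parent_Pa[OF base[unfolded Y]] .
  then show ?case unfolding Y by (blast intro: tranclp.r_into_trancl)
next
  case (step Y Z)
  then obtain \<gamma>1 u1 w1 where Y: "Y = Pa \<gamma>1 u1 w1"
    and IH: "length u1 < length u \<or> length u1 = length u \<and> (expands_first R)\<^sup>+\<^sup>+ \<gamma> \<gamma>1"
    by blast
  from expl_parent_child_Pa[OF step(2)] obtain \<gamma>' u' w' where Z: "Z = Pa \<gamma>' u' w'" by blast
  have edge: "length u' < length u1 \<or> length u' = length u1 \<and> expands_first R \<gamma>1 \<gamma>'"
    using expl_parent_Pa[OF step(2)[unfolded Y Z]] .
  show ?case
  proof (cases "length u' = length u")
    case True
    with IH edge have "(expands_first R)\<^sup>+\<^sup>+ \<gamma> \<gamma>1" and "expands_first R \<gamma>1 \<gamma>'" by auto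
    then have "(expands_first R)\<^sup>+\<^sup>+ \<gamma> \<gamma>'" ..
    with True show ?thesis unfolding Z by blast
  next
    case False
    with IH edge have "length u' < length u" by auto
    then show ?thesis unfolding Z by blast
  qed
qed

lemma lc_cyclic_if_expl_cyclic:
  assumes "expl_cyclic N \<Sigma> R s l"
  shows "lc_cyclic R"
proof -
  from assms obtain C where cycle: "(expl_parent N \<Sigma> R s l)\<^sup>+\<^sup>+ C C"
    unfolding expl_cyclic_def by blast
  then obtain H where "expl_parent N \<Sigma> R s l H C" by (cases rule: tranclp.cases) blast+
  from expl_parent_child_Pa[OF this] obtain \<gamma> u w where C: "C = Pa \<gamma> u w" by blast
  from expl_parent_tranclp_Pa[OF cycle[unfolded C]] have "(expands_first R)\<^sup>+\<^sup>+ \<gamma> \<gamma>"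
    by (metis atom.inject(2) less_irrefl)
  from expands_first_tranclp_lc[OF this] show ?thesis unfolding lc_cyclic_def by blast
qed

lemma expl_cyclic_if_lc_cyclic:
  assumes "lc_cyclic R" and "\<forall>A \<in> N. \<not> useless_nt \<Sigma> R s A"
  shows "\<exists>l. is_prefix \<Sigma> R s l \<and> expl_cyclic N \<Sigma> R s l"
proof -
  from assms(1) obtain A where cycle: "(lc_direct R)\<^sup>+\<^sup>+ A A" unfolding lc_cyclic_def by blast
  then obtain A' where "lc_direct R A A'" by (blast dest: tranclpD)
  then obtain \<beta> where "(A, NT A' # \<beta>) \<in> R" unfolding lc_direct_def by blast
  then have A_N: "A \<in> N" using rule_wf by blast
  obtain l u \<delta> where prefix: "is_prefix \<Sigma> R s l" and u: "set u \<subseteq> \<Sigma>"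
    and A: "parses_prefix N \<Sigma> R s l A u" and \<delta>: "set \<delta> \<subseteq> syms N \<Sigma>"
    and goal: "defined_goal N \<Sigma> R s l (Pa (NT A # \<delta>) u [])"
    using useful_nt_defined_goal[OF A_N] assms(2) A_N by blast
  from prefix expl_cyclic_if_lc_cycle[OF cycle A u goal \<delta>] show ?thesis by blast
qed

end

theorem theorem2:
  fixes N :: "'n set" and \<Sigma> :: "'t set" and R :: "('n \<times> ('n,'t) sym list) set" and s :: 'n
  assumes "cfg N \<Sigma> R s"
    and "\<forall>A \<in> N. \<not> useless_nt \<Sigma> R s A"
  shows "(\<exists>l. is_prefix \<Sigma> R s l \<and> expl_cyclic N \<Sigma> R s l) \<longleftrightarrow> lc_cyclic R"
  using lc_cyclic_if_expl_cyclic[OF assms(1)] expl_cyclic_if_lc_cyclic[OF assms(1) _ assms(2)] by blast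

end
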